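(* Fix $\lambda\in(0,1)$ and let $L=\lambda/\sqrt{1-\lambda^2}$. Let $U\subset V_0$ be open, $\psi\colon U\to\mathbb{R}$ continuous with $\Gamma_\psi$ an intrinsic $\lambda$-Lipschitz graph, $I\subset\mathbb{R}$ an interval, and $g\colon I\to\mathbb{R}$ a differentiable function with $(t,0,g(t))\in U$ and $g'(t)+\psi(t,0,g(t))=0$ for all $t\in I$. Writing $\gamma(t)=(t,0,g(t))$, for all $s,t\in I$: $$|\psi(\gamma(s))-\psi(\gamma(t))|\le L|s-t|\qquad\text{and}\qquad |g(t)-g(s)-g'(s)(t-s)|\le L\frac{(t-s)^2}{2}.$$
   Context: $\mathbb H$ is $\mathbb{R}^3$ with product $uv=u+v+\frac12(x(u)y(v)-y(u)x(v))Z$, $Y=(0,1,0)$, $Z=(0,0,1)$, $u^t=tu$; $d$ is the Carnot–Carathéodory metric. $V_0=\{y=0\}$. $\Gamma_\psi=\{vY^{\psi(v)}:v\in U\}$ is an intrinsic $\lambda$-Lipschitz graph if $|y(q)-y(p)|\le\lambda d(p,q)$ for all $p,q\in\Gamma_\psi$. (The curve $\gamma$ is called a characteristic curve of $\Gamma_\psi$.) *)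

theory Defs
  imports "HOL-Analysis.Analysis"
begin

type_synonym heis = "real \<times> real \<times> real"

definition hx :: "heis \<Rightarrow> real" where "hx p = fst p"
definition hy :: "heis \<Rightarrow> real" where "hy p = fst (snd p)"
definition hz :: "heis \<Rightarrow> real" where "hz p = snd (snd p)"

definition hmult :: "heis \<Rightarrow> heis \<Rightarrow> heis" where
  "hmult u v = (hx u + hx v, hy u + hy v,
                hz u + hz v + (hx u * hy v - hy u * hx v) / 2)"

definition Ypow :: "real \<Rightarrow> heis" where "Ypow t = (0, t, 0)"

text \<open>Horizontal (absolutely continuous) curves on [0,1]:
  gamma' = h1 X(gamma) + h2 Y(gamma) a.e., with X = d_x - y/2 d_z, Y = d_y + x/2 d_z,
  written in integrated form with integrable controls h1, h2.\<close>
definition horizontal_curve :: "(real \<Rightarrow> heis) \<Rightarrow> (real \<Rightarrow> real) \<Rightarrow> (real \<Rightarrow> real) \<Rightarrow> bool" where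
  "horizontal_curve \<gamma> h1 h2 \<longleftrightarrow>
     h1 absolutely_integrable_on {0..1} \<and> h2 absolutely_integrable_on {0..1} \<and>
     (\<forall>t\<in>{0..1}.
        hx (\<gamma> t) = hx (\<gamma> 0) + integral {0..t} h1 \<and>
        hy (\<gamma> t) = hy (\<gamma> 0) + integral {0..t} h2 \<and>
        hz (\<gamma> t) = hz (\<gamma> 0) +
          integral {0..t} (\<lambda>s. (hx (\<gamma> s) * h2 s - hy (\<gamma> s) * h1 s) / 2))"

definition curve_length :: "(real \<Rightarrow> real) \<Rightarrow> (real \<Rightarrow> real) \<Rightarrow> real" where
  "curve_length h1 h2 = integral {0..1} (\<lambda>s. sqrt ((h1 s)\<^sup>2 + (h2 s)\<^sup>2))"

definition cc_dist :: "heis \<Rightarrow> heis \<Rightarrow> real" where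
  "cc_dist p q = Inf {curve_length h1 h2 | \<gamma> h1 h2.
      horizontal_curve \<gamma> h1 h2 \<and> \<gamma> 0 = p \<and> \<gamma> 1 = q}"

definition V0 :: "heis set" where "V0 = {p. hy p = 0}"

definition intrinsic_graph :: "heis set \<Rightarrow> (heis \<Rightarrow> real) \<Rightarrow> heis set" where
  "intrinsic_graph U \<psi> = {hmult v (Ypow (\<psi> v)) | v. v \<in> U}"

definition intrinsic_lipschitz_graph :: "real \<Rightarrow> heis set \<Rightarrow> (heis \<Rightarrow> real) \<Rightarrow> bool" where
  "intrinsic_lipschitz_graph lam U \<psi> \<longleftrightarrow>
     (\<forall>p\<in>intrinsic_graph U \<psi>. \<forall>q\<in>intrinsic_graph U \<psi>.
        \<bar>hy q - hy p\<bar> \<le> lam * cc_dist p q)"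

end

(*
  Along the characteristic t |-> (t, 0, g t) put f t = psi (t, 0, g t), so that g' = -f.  The graph
  points over the characteristic at u < v differ horizontally by (v - u, f v - f u) and vertically
  by the error of the trapezoid rule for the integral of f over [u, v].  A segment followed by a
  small closed loop is a horizontal curve, so the CC distance is at most the horizontal length
  plus C * sqrt |vertical part|, and intrinsic lambda-Lipschitz continuity gives the cone condition

    |f v - f u| <= lambda * (|(v - u, f v - f u)| + C * sqrt |trapezoid error|).

  Where f nearly realises its best Lipschitz constant M, it is nearly affine, the trapezoid error
  is o((v - u)^2), and the cone condition yields M <= lambda * sqrt (1 + M^2), that is
  M <= lambda / sqrt (1 - lambda^2); a cruder run of the same argument first shows that M is
  finite.  The second-order estimate follows by integrating the Lipschitz bound for g' = -f.
*)

theory Submission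
  imports Defs
begin

section \<open>A horizontal curve bounding the Carnot-Caratheodory distance\<close>

lemma cc_dist_le_curve_length:
  assumes "horizontal_curve \<gamma> h1 h2" and "\<gamma> 0 = p" and "\<gamma> 1 = q"
  shows "cc_dist p q \<le> curve_length h1 h2"
  unfolding cc_dist_def
proof (rule cInf_lower)
  show "curve_length h1 h2 \<in> {curve_length h1 h2 |\<gamma> h1 h2. horizontal_curve \<gamma> h1 h2 \<and> \<gamma> 0 = p \<and> \<gamma> 1 = q}"
    using assms by blast
  have "0 \<le> curve_length h1' h2'" for h1' h2'
    unfolding curve_length_def
    by (cases "(\<lambda>s. sqrt ((h1' s)\<^sup>2 + (h2' s)\<^sup>2)) integrable_on {0..1}")
       (auto intro: integral_nonneg simp: not_integrable_integral)
  then show "bdd_below {curve_length h1 h2 |\<gamma> h1 h2. horizontal_curve \<gamma> h1 h2 \<and> \<gamma> 0 = p \<and> \<gamma> 1 = q}"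
    by (auto intro: bdd_belowI[where m = 0])
qed

lemma curve_length_le:
  assumes "continuous_on {0..1} h1" and "continuous_on {0..1} h2"
    and "\<And>w. w \<in> {0..1} \<Longrightarrow> sqrt ((h1 w)\<^sup>2 + (h2 w)\<^sup>2) \<le> B"
  shows "curve_length h1 h2 \<le> B"
proof -
  have "curve_length h1 h2 \<le> integral {0..1} (\<lambda>_::real. B)"
    unfolding curve_length_def
    using assms by (intro integral_le integrable_continuous_interval continuous_intros) auto
  then show ?thesis by simp
qed

lemma integral_eq_increment:
  fixes F f :: "real \<Rightarrow> real"
  assumes "\<And>w. w \<in> {0..1} \<Longrightarrow> (F has_real_derivative f w) (at w within {0..1})"
    and "t \<in> {0..1}"
  shows "integral {0..t} f = F t - F 0"
proof -
  have "(f has_integral (F t - F 0)) {0..t}"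
  proof (intro fundamental_theorem_of_calculus)
    fix w assume "w \<in> {0..t}"
    with assms have "(F has_real_derivative f w) (at w within {0..1})" by auto
    then have "(F has_real_derivative f w) (at w within {0..t})"
      by (rule DERIV_subset) (use assms in auto)
    then show "(F has_vector_derivative f w) (at w within {0..t})"
      by (simp add: has_real_derivative_iff_has_vector_derivative)
  qed (use assms in auto)
  then show ?thesis by (rule integral_unique)
qed

lemma horizontal_curveI:
  fixes x y z h1 h2 :: "real \<Rightarrow> real"
  assumes "continuous_on {0..1} h1" and "continuous_on {0..1} h2"
    and "\<And>w. w \<in> {0..1} \<Longrightarrow> (x has_real_derivative h1 w) (at w within {0..1})"
    and "\<And>w. w \<in> {0..1} \<Longrightarrow> (y has_real_derivative h2 w) (at w within {0..1})"
    and "\<And>w. w \<in> {0..1} \<Longrightarrow>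
           (z has_real_derivative (x w * h2 w - y w * h1 w) / 2) (at w within {0..1})"
  shows "horizontal_curve (\<lambda>w. (x w, y w, z w)) h1 h2"
  unfolding horizontal_curve_def
  using assms integral_eq_increment[of x h1] integral_eq_increment[of y h2]
    integral_eq_increment[of z "\<lambda>w. (x w * h2 w - y w * h1 w) / 2"]
  by (auto simp: hx_def hy_def hz_def field_simps intro: absolutely_integrable_continuous_real)

(* (loop_x, loop_y) is a closed loop at the origin whose coordinates have mean zero and which
   encloses the signed area loop_area 1 / 2 = -1/70.  Added with amplitudes alpha, beta to a
   segment, it moves only the height of the endpoint, by - alpha * beta / 70. *)
definition loop_x :: "real \<Rightarrow> real" where "loop_x w = w - 3 * w^2 + 2 * w^3"
definition loop_x' :: "real \<Rightarrow> real" where "loop_x' w = 1 - 6 * w + 6 * w^2"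
definition loop_x_primitive :: "real \<Rightarrow> real" where
  "loop_x_primitive w = w^2 / 2 - w^3 + w^4 / 2"
definition loop_y :: "real \<Rightarrow> real" where "loop_y w = w - 6 * w^2 + 10 * w^3 - 5 * w^4"
definition loop_y' :: "real \<Rightarrow> real" where "loop_y' w = 1 - 12 * w + 30 * w^2 - 20 * w^3"
definition loop_y_primitive :: "real \<Rightarrow> real" where
  "loop_y_primitive w = w^2 / 2 - 2 * w^3 + 5 * w^4 / 2 - w^5"
definition loop_area :: "real \<Rightarrow> real" where
  "loop_area w = 4 * w^4 - w^3 - 33 / 5 * w^5 + 5 * w^6 - 10 / 7 * w^7"

lemma loop_x_deriv: "(loop_x has_real_derivative loop_x' w) (at w within S)"
  unfolding loop_x_def loop_x'_def
  by (auto intro!: derivative_eq_intros simp: algebra_simps power2_eq_square power3_eq_cube)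

lemma loop_y_deriv: "(loop_y has_real_derivative loop_y' w) (at w within S)"
  unfolding loop_y_def loop_y'_def
  by (auto intro!: derivative_eq_intros simp: algebra_simps power2_eq_square power3_eq_cube)

lemma loop_x_primitive_deriv: "(loop_x_primitive has_real_derivative loop_x w) (at w within S)"
  unfolding loop_x_primitive_def loop_x_def
  by (auto intro!: derivative_eq_intros simp: algebra_simps power2_eq_square power3_eq_cube)

lemma loop_y_primitive_deriv: "(loop_y_primitive has_real_derivative loop_y w) (at w within S)"
  unfolding loop_y_primitive_def loop_y_def
  by (auto intro!: derivative_eq_intros simp: algebra_simps power2_eq_square power3_eq_cube)

lemma loop_area_deriv:
  "(loop_area has_real_derivative loop_x w * loop_y' w - loop_y w * loop_x' w) (at w within S)"
  unfolding loop_area_def loop_x_def loop_y_def loop_x'_def loop_y'_def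
  by (rule derivative_eq_intros refl | simp)+
     (simp add: algebra_simps power2_eq_square power3_eq_cube eval_nat_numeral)

lemma loop_endpoints [simp]:
  "loop_x 0 = 0" "loop_x 1 = 0" "loop_y 0 = 0" "loop_y 1 = 0"
  "loop_x_primitive 0 = 0" "loop_x_primitive 1 = 0"
  "loop_y_primitive 0 = 0" "loop_y_primitive 1 = 0"
  "loop_area 0 = 0" "loop_area 1 = -1/35"
  by (simp_all add: loop_x_def loop_y_def loop_x_primitive_def loop_y_primitive_def loop_area_def)

lemma abs_loop_x'_le: "0 \<le> w \<Longrightarrow> w \<le> 1 \<Longrightarrow> \<bar>loop_x' w\<bar> \<le> 1"
proof -
  assume w: "0 \<le> w" "w \<le> 1"
  have "loop_x' w = 1 - 6 * (w * (1 - w))" and "loop_x' w = 6 * (w - 1/2)^2 - 1/2"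
    unfolding loop_x'_def by (simp_all add: algebra_simps power2_eq_square)
  moreover have "0 \<le> w * (1 - w)" "0 \<le> (w - 1/2)^2"
    using w by simp_all
  ultimately show ?thesis unfolding abs_le_iff by linarith
qed

lemma abs_loop_y'_le: "0 \<le> w \<Longrightarrow> w \<le> 1 \<Longrightarrow> \<bar>loop_y' w\<bar> \<le> 1"
proof -
  assume w: "0 \<le> w" "w \<le> 1"
  have "loop_y' w = 1 - w * (20 * (w - 3/4)^2 + 3/4)"
    and "loop_y' w = (1 - w) * (20 * (w - 1/4)^2 + 3/4) - 1"
    unfolding loop_y'_def by (simp_all add: algebra_simps power2_eq_square power3_eq_cube)
  moreover have "0 \<le> w * (20 * (w - 3/4)^2 + 3/4)" "0 \<le> (1 - w) * (20 * (w - 1/4)^2 + 3/4)"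
    using w by simp_all
  ultimately show ?thesis unfolding abs_le_iff by linarith
qed

lemma loop_curve_exists:
  fixes p :: heis and h k \<alpha> \<beta> :: real
  obtains \<gamma> where "horizontal_curve \<gamma> (\<lambda>w. h + \<alpha> * loop_x' w) (\<lambda>w. k + \<beta> * loop_y' w)"
    and "\<gamma> 0 = p"
    and "\<gamma> 1 = (hx p + h, hy p + k, hz p + (hx p * k - hy p * h) / 2 - \<alpha> * \<beta> / 70)"
proof
  define x0 y0 z0 where "x0 = hx p" and "y0 = hy p" and "z0 = hz p"
  define x where "x w = x0 + h * w + \<alpha> * loop_x w" for w
  define y where "y w = y0 + k * w + \<beta> * loop_y w" for w
  define z where "z w = z0 + ((x0 * k - y0 * h) * w + x0 * \<beta> * loop_y w - y0 * \<alpha> * loop_x w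
      + h * \<beta> * (w * loop_y w - 2 * loop_y_primitive w)
      + k * \<alpha> * (2 * loop_x_primitive w - w * loop_x w) + \<alpha> * \<beta> * loop_area w) / 2" for w
  show "horizontal_curve (\<lambda>w. (x w, y w, z w)) (\<lambda>w. h + \<alpha> * loop_x' w) (\<lambda>w. k + \<beta> * loop_y' w)"
    unfolding x_def y_def z_def
    by (intro horizontal_curveI)
       (auto simp: loop_x'_def loop_y'_def field_simps power2_eq_square
        intro!: continuous_intros derivative_eq_intros loop_x_deriv loop_y_deriv
          loop_x_primitive_deriv loop_y_primitive_deriv loop_area_deriv)
  show "(x 0, y 0, z 0) = p" by (simp add: x_def y_def z_def x0_def y0_def z0_def hx_def hy_def hz_def)
  show "(x 1, y 1, z 1) = (hx p + h, hy p + k, hz p + (hx p * k - hy p * h) / 2 - \<alpha> * \<beta> / 70)"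
    by (simp add: x_def y_def z_def x0_def y0_def z0_def field_simps)
qed

(* The last term is the height of p^-1 q. *)
lemma cc_dist_le:
  fixes p q :: heis
  shows "cc_dist p q \<le> sqrt ((hx q - hx p)\<^sup>2 + (hy q - hy p)\<^sup>2)
    + 2 * sqrt 70 * sqrt \<bar>hz q - hz p - (hx p * hy q - hy p * hx q) / 2\<bar>"
proof -
  define h k where "h = hx q - hx p" and "k = hy q - hy p"
  define D where "D = hz q - hz p - (hx p * hy q - hy p * hx q) / 2"
  define c where "c = sqrt (70 * \<bar>D\<bar>)"
  define \<alpha> where "\<alpha> = - sgn D * c"
  obtain \<gamma> where \<gamma>: "horizontal_curve \<gamma> (\<lambda>w. h + \<alpha> * loop_x' w) (\<lambda>w. k + c * loop_y' w)"
    and "\<gamma> 0 = p"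
    and \<gamma>1: "\<gamma> 1 = (hx p + h, hy p + k, hz p + (hx p * k - hy p * h) / 2 - \<alpha> * c / 70)"
    by (rule loop_curve_exists)
  have "c * c = 70 * \<bar>D\<bar>"
    unfolding c_def by simp
  then have "\<alpha> * c / 70 = - D"
    by (simp add: \<alpha>_def mult.assoc sgn_mult_abs mult.left_commute[of "sgn D"])
  then have "hz p + (hx p * k - hy p * h) / 2 - \<alpha> * c / 70 = hz q"
    unfolding h_def k_def D_def by (simp add: field_simps)
  then have "\<gamma> 1 = q"
    unfolding \<gamma>1 h_def k_def by (simp add: hx_def hy_def hz_def)
  have "0 \<le> c"
    unfolding c_def by simp
  have "cc_dist p q \<le> sqrt (h\<^sup>2 + k\<^sup>2) + 2 * c"
  proof (rule order_trans[OF cc_dist_le_curve_length[OF \<gamma> \<open>\<gamma> 0 = p\<close> \<open>\<gamma> 1 = q\<close>]],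
         rule curve_length_le)
    fix w :: real assume "w \<in> {0..1}"
    then have "\<bar>loop_x' w\<bar> \<le> 1" "\<bar>loop_y' w\<bar> \<le> 1"
      using abs_loop_x'_le[of w] abs_loop_y'_le[of w] by auto
    moreover have "\<bar>sgn D\<bar> \<le> 1"
      by (simp add: abs_sgn_eq)
    ultimately have "c * (\<bar>sgn D\<bar> * \<bar>loop_x' w\<bar>) \<le> c" "c * \<bar>loop_y' w\<bar> \<le> c"
      using \<open>0 \<le> c\<close> by (simp_all add: mult_left_le mult_le_one)
    then have "\<bar>\<alpha> * loop_x' w\<bar> \<le> c" "\<bar>c * loop_y' w\<bar> \<le> c"
      using \<open>0 \<le> c\<close> by (simp_all add: \<alpha>_def abs_mult ac_simps)
    then show "sqrt ((h + \<alpha> * loop_x' w)\<^sup>2 + (k + c * loop_y' w)\<^sup>2) \<le> sqrt (h\<^sup>2 + k\<^sup>2) + 2 * c"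
      using real_sqrt_sum_squares_triangle_ineq[of h "\<alpha> * loop_x' w" k "c * loop_y' w"]
        sqrt_sum_squares_le_sum_abs[of "\<alpha> * loop_x' w" "c * loop_y' w"]
      by linarith
  qed (auto simp: loop_x'_def loop_y'_def intro!: continuous_intros)
  also have "c = sqrt 70 * sqrt \<bar>D\<bar>"
    unfolding c_def by (simp add: real_sqrt_mult)
  finally show ?thesis
    unfolding h_def k_def D_def by (simp add: mult.assoc)
qed

section \<open>One-variable estimates\<close>

lemma chord_deviation_le:
  fixes u v w K m e fu fv fw :: real
  assumes uv: "u < v" and w: "u \<le> w" "w \<le> v" and nonneg: "0 \<le> m" "0 \<le> e"
    and "\<bar>fw - fu\<bar> \<le> K * (w - u) + m" and "\<bar>fv - fw\<bar> \<le> K * (v - w) + m"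
    and "K * (v - u) + m - e \<le> \<bar>fv - fu\<bar>"
  shows "\<bar>fw - (fu + (fv - fu) * (w - u) / (v - u))\<bar> \<le> m + e"
proof -
  define \<theta> where "\<theta> = (w - u) / (v - u)"
  have \<theta>: "0 \<le> \<theta>" "\<theta> \<le> 1" "K * (w - u) = \<theta> * (K * (v - u))" "K * (v - w) = (1 - \<theta>) * (K * (v - u))"
    using uv w by (auto simp: \<theta>_def field_simps)
  have \<theta>_mult: "\<theta> * m \<le> m" "\<theta> * e \<le> e" "0 \<le> \<theta> * m" "0 \<le> \<theta> * e"
    using \<theta> nonneg by (auto simp: mult_left_le_one_le)
  have increasing_case: "\<bar>Fw - (Fu + \<theta> * (Fv - Fu))\<bar> \<le> m + e"
    if "Fu \<le> Fv" "\<bar>Fw - Fu\<bar> \<le> K * (w - u) + m" "\<bar>Fv - Fw\<bar> \<le> K * (v - w) + m"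
      "K * (v - u) + m - e \<le> Fv - Fu" for Fu Fv Fw
  proof -
    have "\<theta> * (K * (v - u) + m - e) \<le> \<theta> * (Fv - Fu)"
      "(1 - \<theta>) * (K * (v - u) + m - e) \<le> (1 - \<theta>) * (Fv - Fu)"
      using \<theta> that(4) by (auto intro: mult_left_mono)
    then show ?thesis
      using that \<theta> \<theta>_mult by (auto simp: abs_le_iff algebra_simps)
  qed
  have "(fv - fu) * (w - u) / (v - u) = \<theta> * (fv - fu)"
    by (simp add: \<theta>_def)
  moreover have "\<bar>fw - (fu + \<theta> * (fv - fu))\<bar> \<le> m + e"
  proof (cases "fu \<le> fv")
    case True
    then show ?thesis using increasing_case[of fu fv fw] assms(6-8) by simp
  next
    case False
    then have "\<bar>- fw - (- fu + \<theta> * (- fv - - fu))\<bar> \<le> m + e"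
      using increasing_case[of "- fu" "- fv" "- fw"] assms(6-8) by (simp add: abs_minus_commute)
    then show ?thesis by (simp add: abs_minus_commute algebra_simps)
  qed
  ultimately show ?thesis by simp
qed

(* For g' = -f, the error of the trapezoid rule for the integral of f over [u, v]. *)
definition trapezoid_error :: "(real \<Rightarrow> real) \<Rightarrow> (real \<Rightarrow> real) \<Rightarrow> real \<Rightarrow> real \<Rightarrow> real" where
  "trapezoid_error g f u v = g v - g u + (v - u) * (f u + f v) / 2"

lemma abs_trapezoid_error_le:
  fixes f g :: "real \<Rightarrow> real"
  assumes "u < v"
    and g_deriv: "\<And>x. x \<in> {u..v} \<Longrightarrow> (g has_real_derivative - f x) (at x within {u..v})"
    and "\<And>w. w \<in> {u..v} \<Longrightarrow> \<bar>f w - (f u + (f v - f u) * (w - u) / (v - u))\<bar> \<le> e"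
  shows "\<bar>trapezoid_error g f u v\<bar> \<le> e * (v - u)"
proof -
  define q where "q = (f v - f u) / (v - u)"
  \<comment> \<open>g plus a primitive of the chord of f, so that E' is the chord minus f\<close>
  define E where "E w = g w + (w - u) * f u + (w - u)\<^sup>2 * q / 2" for w
  have "norm (E v - E u) \<le> e * norm (v - u)"
  proof (rule field_differentiable_bound[where S = "{u..v}"])
    fix w assume w: "w \<in> {u..v}"
    show "(E has_field_derivative (- f w + f u + (w - u) * q)) (at w within {u..v})"
      unfolding E_def using g_deriv[OF w]
      by (auto intro!: derivative_eq_intros simp: power2_eq_square field_simps)
    have "- f w + f u + (w - u) * q = - (f w - (f u + (f v - f u) * (w - u) / (v - u)))"
      by (simp add: q_def algebra_simps)
    then show "norm (- f w + f u + (w - u) * q) \<le> e"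
      using assms(3)[OF w] by (simp only: real_norm_def abs_minus_cancel)
  qed (use \<open>u < v\<close> in auto)
  moreover have "E v - E u = trapezoid_error g f u v"
    using \<open>u < v\<close> by (simp add: E_def q_def trapezoid_error_def power2_eq_square field_simps)
  ultimately show ?thesis
    using \<open>u < v\<close> by simp
qed

lemma abs_trapezoid_error_le_near_extremal:
  fixes f g :: "real \<Rightarrow> real"
  assumes "u < v" and "0 \<le> m" and "0 \<le> e"
    and "\<And>x. x \<in> {u..v} \<Longrightarrow> (g has_real_derivative - f x) (at x within {u..v})"
    and sub_extremal: "\<And>x y. x \<in> {u..v} \<Longrightarrow> y \<in> {u..v} \<Longrightarrow> x \<le> y \<Longrightarrow> \<bar>f y - f x\<bar> \<le> K * (y - x) + m"
    and "K * (v - u) + m - e \<le> \<bar>f v - f u\<bar>"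
  shows "\<bar>trapezoid_error g f u v\<bar> \<le> (m + e) * (v - u)"
  using assms(1,4)
proof (rule abs_trapezoid_error_le)
  fix w assume "w \<in> {u..v}"
  then show "\<bar>f w - (f u + (f v - f u) * (w - u) / (v - u))\<bar> \<le> m + e"
    using assms(1-3,6) sub_extremal[of u w] sub_extremal[of w v]
    by (intro chord_deviation_le[where K = K]) auto
qed

lemma lipschitz_excess_attains_max:
  fixes f :: "real \<Rightarrow> real"
  assumes "continuous_on {a..b} f" and "x \<in> {a..b}" and "y \<in> {a..b}"
    and "K * \<bar>y - x\<bar> < \<bar>f y - f x\<bar>"
  obtains u v m where "u \<in> {a..b}" and "v \<in> {a..b}" and "u < v" and "0 < m"
    and "\<bar>f v - f u\<bar> = K * (v - u) + m"
    and "\<And>x y. x \<in> {a..b} \<Longrightarrow> y \<in> {a..b} \<Longrightarrow> \<bar>f y - f x\<bar> \<le> K * \<bar>y - x\<bar> + m"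
proof -
  define excess where "excess z = \<bar>f (snd z) - f (fst z)\<bar> - K * \<bar>snd z - fst z\<bar>" for z
  have "continuous_on ({a..b} \<times> {a..b}) excess"
    unfolding excess_def
    by (intro continuous_intros continuous_on_compose2[OF assms(1)]) auto
  then obtain z where z: "z \<in> {a..b} \<times> {a..b}" and max: "\<And>z'. z' \<in> {a..b} \<times> {a..b} \<Longrightarrow> excess z' \<le> excess z"
    using continuous_attains_sup[of "{a..b} \<times> {a..b}" excess] assms(2)
    by (auto simp: compact_Times)
  obtain u v where z_eq: "z = (u, v)" by (cases z)
  have uv: "u \<in> {a..b}" "v \<in> {a..b}"
    using z z_eq by auto
  have pos: "0 < excess (u, v)"
    using max[of "(x, y)"] assms z_eq by (auto simp: excess_def)
  then have "u \<noteq> v"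
    by (auto simp: excess_def)
  have bound: "\<bar>f y' - f x'\<bar> \<le> K * \<bar>y' - x'\<bar> + excess (u, v)" if "x' \<in> {a..b}" "y' \<in> {a..b}" for x' y'
    using max[of "(x', y')"] that z_eq by (simp add: excess_def)
  show ?thesis
  proof (cases "u < v")
    case True
    show ?thesis
    proof (rule that[of u v "excess (u, v)"])
      show "\<bar>f v - f u\<bar> = K * (v - u) + excess (u, v)"
        using True by (simp add: excess_def)
    qed (use uv True pos bound in auto)
  next
    case False
    with \<open>u \<noteq> v\<close> have "v < u" by simp
    show ?thesis
    proof (rule that[of v u "excess (u, v)"])
      show "\<bar>f u - f v\<bar> = K * (u - v) + excess (u, v)"
        using \<open>v < u\<close> by (simp add: excess_def abs_minus_commute)
    qed (use uv \<open>v < u\<close> pos bound in auto)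
  qed
qed

lemma best_lipschitz_constant:
  fixes f :: "real \<Rightarrow> real" and S :: "real set"
  assumes "\<And>x y. x \<in> S \<Longrightarrow> y \<in> S \<Longrightarrow> \<bar>f y - f x\<bar> \<le> K * \<bar>y - x\<bar>"
    and "u \<in> S" and "v \<in> S" and "u < v"
  obtains M where "\<And>x y. x \<in> S \<Longrightarrow> y \<in> S \<Longrightarrow> x \<le> y \<Longrightarrow> \<bar>f y - f x\<bar> \<le> M * (y - x)"
    and "\<And>\<epsilon>. 0 < \<epsilon> \<Longrightarrow> \<exists>x y. x \<in> S \<and> y \<in> S \<and> x < y \<and> (M - \<epsilon>) * (y - x) \<le> \<bar>f y - f x\<bar>"
proof
  define slopes where "slopes = {\<bar>f y - f x\<bar> / (y - x) | x y. x \<in> S \<and> y \<in> S \<and> x < y}"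
  have "slopes \<noteq> {}"
    using assms(2-4) unfolding slopes_def by blast
  have "bdd_above slopes"
  proof (rule bdd_aboveI[where M = K])
    fix r assume "r \<in> slopes"
    then obtain x y where "x \<in> S" "y \<in> S" "x < y" "r = \<bar>f y - f x\<bar> / (y - x)"
      unfolding slopes_def by blast
    then show "r \<le> K"
      using assms(1)[of x y] by (simp add: divide_le_eq)
  qed
  show "\<bar>f y - f x\<bar> \<le> Sup slopes * (y - x)" if "x \<in> S" "y \<in> S" "x \<le> y" for x y
  proof (cases "x = y")
    case False
    with that have "\<bar>f y - f x\<bar> / (y - x) \<in> slopes"
      unfolding slopes_def by force
    then have "\<bar>f y - f x\<bar> / (y - x) \<le> Sup slopes"
      using \<open>bdd_above slopes\<close> by (rule cSup_upper)
    with that False show ?thesis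
      by (simp add: divide_le_eq)
  qed simp
  show "\<exists>x y. x \<in> S \<and> y \<in> S \<and> x < y \<and> (Sup slopes - \<epsilon>) * (y - x) \<le> \<bar>f y - f x\<bar>"
    if "0 < \<epsilon>" for \<epsilon>
  proof -
    have "Sup slopes - \<epsilon> < Sup slopes"
      using that by simp
    then obtain x y where "x \<in> S" "y \<in> S" "x < y" "Sup slopes - \<epsilon> < \<bar>f y - f x\<bar> / (y - x)"
      using less_cSup_iff[OF \<open>slopes \<noteq> {}\<close> \<open>bdd_above slopes\<close>] unfolding slopes_def by blast
    then show ?thesis
      by (intro exI[of _ x] exI[of _ y]) (simp add: less_divide_eq)
  qed
qed

lemma mult_sqrt_le_arith_mean:
  fixes A c x y :: real
  assumes "0 \<le> A" and "0 < c" and "0 \<le> x" and "0 \<le> y"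
  shows "A * sqrt (x * y) \<le> (A\<^sup>2 / c * y + c * x) / 2"
proof -
  have "(A\<^sup>2 / c * y) * (c * x) = A\<^sup>2 * (x * y)"
    using assms(2) by (simp add: field_simps)
  then have "A * sqrt (x * y) = sqrt ((A\<^sup>2 / c * y) * (c * x))"
    using assms(1) by (simp add: real_sqrt_mult)
  also have "\<dots> \<le> (A\<^sup>2 / c * y + c * x) / 2"
    using assms by (intro arith_geo_mean_sqrt) auto
  finally show ?thesis .
qed

lemma slope_le_of_cone:
  fixes lam M :: real
  assumes "0 < lam" and "lam < 1" and "M \<le> lam * sqrt (1 + M\<^sup>2)"
  shows "M \<le> lam / sqrt (1 - lam\<^sup>2)"
proof -
  have "0 < 1 - lam\<^sup>2"
    using assms(1,2) by (simp add: abs_square_less_1)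
  show ?thesis
  proof (cases "M \<le> 0")
    case True
    moreover have "0 \<le> lam / sqrt (1 - lam\<^sup>2)"
      using assms(1) \<open>0 < 1 - lam\<^sup>2\<close> by (intro divide_nonneg_nonneg) auto
    ultimately show ?thesis by linarith
  next
    case False
    have "M\<^sup>2 \<le> (lam * sqrt (1 + M\<^sup>2))\<^sup>2"
      using False assms(3) by (intro power_mono) auto
    also have "\<dots> = lam\<^sup>2 + lam\<^sup>2 * M\<^sup>2"
      by (simp add: power_mult_distrib distrib_left)
    finally have "M\<^sup>2 * (1 - lam\<^sup>2) \<le> lam\<^sup>2"
      by (simp add: algebra_simps)
    moreover have "(M * sqrt (1 - lam\<^sup>2))\<^sup>2 = M\<^sup>2 * (1 - lam\<^sup>2)"
      using \<open>0 < 1 - lam\<^sup>2\<close> by (simp add: power_mult_distrib)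
    ultimately have "(M * sqrt (1 - lam\<^sup>2))\<^sup>2 \<le> lam\<^sup>2"
      by simp
    then have "M * sqrt (1 - lam\<^sup>2) \<le> lam"
      using assms(1) by (auto intro: power2_le_imp_le)
    then show ?thesis
      using \<open>0 < 1 - lam\<^sup>2\<close> by (simp add: le_divide_eq)
  qed
qed

lemma taylor_remainder_le:
  fixes g g' :: "real \<Rightarrow> real"
  assumes g_deriv: "\<And>x. x \<in> {a..b} \<Longrightarrow> (g has_real_derivative g' x) (at x within {a..b})"
    and lipschitz: "\<And>x y. x \<in> {a..b} \<Longrightarrow> y \<in> {a..b} \<Longrightarrow> \<bar>g' y - g' x\<bar> \<le> L * \<bar>y - x\<bar>"
    and s: "s \<in> {a..b}" and t: "t \<in> {a..b}"
  shows "g t - g s - g' s * (t - s) \<le> L * (t - s)\<^sup>2 / 2"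
proof -
  define \<phi> where "\<phi> w = g w - g s - g' s * (w - s) - L * (w - s)\<^sup>2 / 2" for w
  define \<phi>' where "\<phi>' w = g' w - g' s - L * (w - s)" for w
  have \<phi>_deriv: "(\<phi> has_real_derivative \<phi>' x) (at x within {a..b})" if "x \<in> {a..b}" for x
    unfolding \<phi>_def \<phi>'_def using g_deriv[OF that]
    by (auto intro!: derivative_eq_intros simp: power2_eq_square)
  have \<phi>_deriv_at: "(\<phi> has_real_derivative \<phi>' x) (at x)" if "a < x" "x < b" for x
    using \<phi>_deriv[of x] that at_within_Icc_at[OF that] by simp
  have \<phi>_cont: "continuous_on {a..b} \<phi>"
    unfolding continuous_on_eq_continuous_within using \<phi>_deriv DERIV_continuous by blast
  have "\<phi> t \<le> \<phi> s"
  proof (cases "s \<le> t")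
    case True
    show ?thesis
    proof (rule DERIV_nonpos_imp_decreasing_open[OF True])
      fix x assume x: "s < x" "x < t"
      have "g' x - g' s \<le> L * (x - s)"
        using lipschitz[of s x] x s t by auto
      moreover have "(\<phi> has_real_derivative \<phi>' x) (at x)"
        using x s t by (intro \<phi>_deriv_at) auto
      ultimately show "\<exists>y. (\<phi> has_real_derivative y) (at x) \<and> y \<le> 0"
        by (auto simp: \<phi>'_def)
    qed (use continuous_on_subset[OF \<phi>_cont] s t in auto)
  next
    case False
    show ?thesis
    proof (rule DERIV_nonneg_imp_increasing_open[of t s \<phi>])
      fix x assume x: "t < x" "x < s"
      have "g' s - g' x \<le> L * (s - x)"
        using lipschitz[of x s] x s t by auto
      then have "0 \<le> \<phi>' x"
        by (simp add: \<phi>'_def algebra_simps)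
      moreover have "(\<phi> has_real_derivative \<phi>' x) (at x)"
        using x s t by (intro \<phi>_deriv_at) auto
      ultimately show "\<exists>y. (\<phi> has_real_derivative y) (at x) \<and> 0 \<le> y"
        by blast
    qed (use continuous_on_subset[OF \<phi>_cont] s t False in auto)
  qed
  then show ?thesis
    by (simp add: \<phi>_def)
qed

lemma abs_taylor_remainder_le:
  fixes g g' :: "real \<Rightarrow> real"
  assumes "\<And>x. x \<in> {a..b} \<Longrightarrow> (g has_real_derivative g' x) (at x within {a..b})"
    and "\<And>x y. x \<in> {a..b} \<Longrightarrow> y \<in> {a..b} \<Longrightarrow> \<bar>g' y - g' x\<bar> \<le> L * \<bar>y - x\<bar>"
    and "s \<in> {a..b}" and "t \<in> {a..b}"
  shows "\<bar>g t - g s - g' s * (t - s)\<bar> \<le> L * (t - s)\<^sup>2 / 2"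
proof -
  have "- g t - - g s - - g' s * (t - s) \<le> L * (t - s)\<^sup>2 / 2"
    using assms
    by (intro taylor_remainder_le[where g = "\<lambda>x. - g x" and g' = "\<lambda>x. - g' x"])
       (auto intro: derivative_eq_intros simp: abs_minus_commute)
  then have "g s - g t + g' s * (t - s) \<le> L * (t - s)\<^sup>2 / 2"
    by simp
  then show ?thesis
    using taylor_remainder_le[OF assms] by linarith
qed

section \<open>Regularity along a characteristic\<close>

(* f is psi along the characteristic t |-> (t, 0, g t); the cone condition is what intrinsic
   Lipschitz continuity gives between the graph points over it (intrinsic_lipschitz_graph_cone). *)
locale characteristic_cone =
  fixes lam C a b :: real and f g :: "real \<Rightarrow> real"
  assumes lam_pos: "0 < lam" and lam_less_one: "lam < 1" and C_nonneg: "0 \<le> C"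
    and f_continuous: "continuous_on {a..b} f"
    and g_deriv: "\<And>x. x \<in> {a..b} \<Longrightarrow> (g has_real_derivative - f x) (at x within {a..b})"
    and cone: "\<And>u v. u \<in> {a..b} \<Longrightarrow> v \<in> {a..b} \<Longrightarrow> u < v \<Longrightarrow>
      \<bar>f v - f u\<bar> \<le> lam * (sqrt ((v - u)\<^sup>2 + (f v - f u)\<^sup>2) + C * sqrt \<bar>trapezoid_error g f u v\<bar>)"
begin

lemma g_deriv_within:
  assumes "u \<in> {a..b}" and "v \<in> {a..b}" and "x \<in> {u..v}"
  shows "(g has_real_derivative - f x) (at x within {u..v})"
  using assms by (intro DERIV_subset[OF g_deriv]) auto

lemma lipschitz_exists: "\<exists>K. \<forall>u\<in>{a..b}. \<forall>v\<in>{a..b}. \<bar>f v - f u\<bar> \<le> K * \<bar>v - u\<bar>"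
proof -
  \<comment> \<open>At a pair maximising the excess over the slope K, f stays close to its chord, so the
    trapezoid error is at most m h; for K this large the cone condition then contradicts AM-GM.\<close>
  define B where "B = (lam * C)\<^sup>2 / (1 - lam)"
  define K where "K = (lam + B) / (1 - lam)"
  have "\<bar>f v - f u\<bar> \<le> K * \<bar>v - u\<bar>" if uv: "u \<in> {a..b}" "v \<in> {a..b}" for u v
  proof (rule ccontr)
    assume "\<not> ?thesis"
    then have "K * \<bar>v - u\<bar> < \<bar>f v - f u\<bar>" by simp
    then obtain x y m where xy: "x \<in> {a..b}" "y \<in> {a..b}" "x < y" and "0 < m"
      and extremal: "\<bar>f y - f x\<bar> = K * (y - x) + m"
      and excess_le: "\<And>x y. x \<in> {a..b} \<Longrightarrow> y \<in> {a..b} \<Longrightarrow> \<bar>f y - f x\<bar> \<le> K * \<bar>y - x\<bar> + m"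
      by (rule lipschitz_excess_attains_max[OF f_continuous uv]) blast
    define h where "h = y - x"
    have "0 < h" "0 < 1 - lam" "0 \<le> B"
      using xy lam_less_one by (auto simp: h_def B_def)
    have "\<bar>f y' - f x'\<bar> \<le> K * (y' - x') + m" if "x' \<in> {x..y}" "y' \<in> {x..y}" "x' \<le> y'" for x' y'
      using excess_le[of x' y'] that xy by (auto simp: abs_of_nonneg)
    then have "\<bar>trapezoid_error g f x y\<bar> \<le> (m + 0) * h"
      unfolding h_def
      using xy \<open>0 < m\<close> extremal g_deriv_within[of x y]
      by (intro abs_trapezoid_error_le_near_extremal[where K = K]) auto
    then have "sqrt \<bar>trapezoid_error g f x y\<bar> \<le> sqrt (m * h)"
      by simp
    moreover have "sqrt (h\<^sup>2 + (f y - f x)\<^sup>2) \<le> h + \<bar>f y - f x\<bar>"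
      using sqrt_sum_squares_le_sum_abs[of h "f y - f x"] \<open>0 < h\<close> by simp
    ultimately have "sqrt (h\<^sup>2 + (f y - f x)\<^sup>2) + C * sqrt \<bar>trapezoid_error g f x y\<bar>
        \<le> h + \<bar>f y - f x\<bar> + C * sqrt (m * h)"
      using C_nonneg by (intro add_mono mult_left_mono)
    then have "lam * (sqrt (h\<^sup>2 + (f y - f x)\<^sup>2) + C * sqrt \<bar>trapezoid_error g f x y\<bar>)
        \<le> lam * (h + \<bar>f y - f x\<bar> + C * sqrt (m * h))"
      using lam_pos by (intro mult_left_mono) auto
    moreover have "\<bar>f y - f x\<bar> \<le> lam * (sqrt (h\<^sup>2 + (f y - f x)\<^sup>2) + C * sqrt \<bar>trapezoid_error g f x y\<bar>)"
      using cone[OF xy] by (simp add: h_def)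
    ultimately have "K * h + m \<le> lam * (h + (K * h + m) + C * sqrt (m * h))"
      using extremal by (simp add: h_def)
    moreover have "lam * C * sqrt (m * h) \<le> (B * h + (1 - lam) * m) / 2"
      using mult_sqrt_le_arith_mean[of "lam * C" "1 - lam" m h] lam_pos C_nonneg \<open>0 < m\<close> \<open>0 < h\<close>
        \<open>0 < 1 - lam\<close> by (simp add: B_def)
    moreover have "(1 - lam) * K * h = lam * h + B * h"
      using \<open>0 < 1 - lam\<close> by (simp add: K_def field_simps)
    ultimately have "(1 - lam) * m + B * h \<le> 0"
      by (simp add: algebra_simps)
    moreover have "0 < (1 - lam) * m" "0 \<le> B * h"
      using \<open>0 < m\<close> \<open>0 < h\<close> \<open>0 < 1 - lam\<close> \<open>0 \<le> B\<close> by simp_all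
    ultimately show False
      by linarith
  qed
  then show ?thesis by blast
qed

lemma slope_bound_near_extremal:
  assumes M_lipschitz: "\<And>x y. x \<in> {a..b} \<Longrightarrow> y \<in> {a..b} \<Longrightarrow> x \<le> y \<Longrightarrow> \<bar>f y - f x\<bar> \<le> M * (y - x)"
    and xy: "x \<in> {a..b}" "y \<in> {a..b}" "x < y" and "0 \<le> t"
    and near_extremal: "(M - t\<^sup>2) * (y - x) \<le> \<bar>f y - f x\<bar>"
  shows "M \<le> lam * sqrt (1 + M\<^sup>2) + t\<^sup>2 + lam * C * t"
proof -
  define h where "h = y - x"
  define \<rho> where "\<rho> = \<bar>f y - f x\<bar> / h"
  have "0 < h"
    using xy by (simp add: h_def)
  have slope: "\<bar>f y - f x\<bar> = \<rho> * h"
    using \<open>0 < h\<close> by (simp add: \<rho>_def)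
  have \<rho>_bounds: "M - t\<^sup>2 \<le> \<rho>" "\<rho> \<le> M" "0 \<le> \<rho>"
    using near_extremal M_lipschitz[of x y] xy \<open>0 < h\<close>
    by (auto simp: \<rho>_def h_def field_simps)
  have "M * (y - x) + 0 - t\<^sup>2 * (y - x) \<le> \<bar>f y - f x\<bar>"
    using near_extremal by (simp add: algebra_simps)
  then have "\<bar>trapezoid_error g f x y\<bar> \<le> (0 + t\<^sup>2 * h) * h"
    unfolding h_def
    using xy \<open>0 \<le> t\<close> M_lipschitz g_deriv_within[of x y]
    by (intro abs_trapezoid_error_le_near_extremal[where K = M]) auto
  then have "sqrt \<bar>trapezoid_error g f x y\<bar> \<le> sqrt ((t * h)\<^sup>2)"
    by (simp add: power2_eq_square algebra_simps)
  then have "C * sqrt \<bar>trapezoid_error g f x y\<bar> \<le> C * (t * h)"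
    using \<open>0 \<le> t\<close> \<open>0 < h\<close> C_nonneg by (simp add: mult_left_mono)
  moreover have "sqrt (h\<^sup>2 + (f y - f x)\<^sup>2) = h * sqrt (1 + \<rho>\<^sup>2)"
  proof -
    have "(f y - f x)\<^sup>2 = (\<rho> * h)\<^sup>2"
      using slope by (metis power2_abs)
    then have "h\<^sup>2 + (f y - f x)\<^sup>2 = h\<^sup>2 * (1 + \<rho>\<^sup>2)"
      by (simp add: power_mult_distrib algebra_simps)
    then show ?thesis
      using \<open>0 < h\<close> by (simp add: real_sqrt_mult)
  qed
  ultimately have "sqrt (h\<^sup>2 + (f y - f x)\<^sup>2) + C * sqrt \<bar>trapezoid_error g f x y\<bar>
      \<le> h * sqrt (1 + \<rho>\<^sup>2) + C * (t * h)"
    by simp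
  then have "lam * (sqrt (h\<^sup>2 + (f y - f x)\<^sup>2) + C * sqrt \<bar>trapezoid_error g f x y\<bar>)
      \<le> lam * (h * sqrt (1 + \<rho>\<^sup>2) + C * (t * h))"
    using lam_pos by (intro mult_left_mono) auto
  moreover have "\<bar>f y - f x\<bar> \<le> lam * (sqrt (h\<^sup>2 + (f y - f x)\<^sup>2) + C * sqrt \<bar>trapezoid_error g f x y\<bar>)"
    using cone[OF xy] by (simp add: h_def)
  ultimately have "\<rho> * h \<le> lam * (h * sqrt (1 + \<rho>\<^sup>2) + C * (t * h))"
    using slope by simp
  then have "\<rho> * h \<le> (lam * sqrt (1 + \<rho>\<^sup>2) + lam * C * t) * h"
    by (simp add: algebra_simps)
  then have "\<rho> \<le> lam * sqrt (1 + \<rho>\<^sup>2) + lam * C * t"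
    using \<open>0 < h\<close> by (simp only: mult_le_cancel_right_pos)
  moreover have "lam * sqrt (1 + \<rho>\<^sup>2) \<le> lam * sqrt (1 + M\<^sup>2)"
    using \<rho>_bounds lam_pos by (intro mult_left_mono) (auto intro: power_mono)
  ultimately show ?thesis
    using \<rho>_bounds by linarith
qed

lemma lipschitz:
  assumes "u \<in> {a..b}" and "v \<in> {a..b}"
  shows "\<bar>f v - f u\<bar> \<le> lam / sqrt (1 - lam\<^sup>2) * \<bar>v - u\<bar>"
proof (cases "u = v")
  case False
  obtain K where K: "\<And>x y. x \<in> {a..b} \<Longrightarrow> y \<in> {a..b} \<Longrightarrow> \<bar>f y - f x\<bar> \<le> K * \<bar>y - x\<bar>"
    using lipschitz_exists by blast
  have uv: "min u v \<in> {a..b}" "max u v \<in> {a..b}" "min u v < max u v"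
    using assms False by auto
  obtain M
    where M_lipschitz: "\<And>x y. x \<in> {a..b} \<Longrightarrow> y \<in> {a..b} \<Longrightarrow> x \<le> y \<Longrightarrow> \<bar>f y - f x\<bar> \<le> M * (y - x)"
      and M_optimal: "\<And>\<epsilon>. 0 < \<epsilon> \<Longrightarrow>
        \<exists>x y. x \<in> {a..b} \<and> y \<in> {a..b} \<and> x < y \<and> (M - \<epsilon>) * (y - x) \<le> \<bar>f y - f x\<bar>"
    using best_lipschitz_constant[OF K uv] by blast
  \<comment> \<open>Where f nearly attains the slope M it is nearly affine, the trapezoid error is o(h^2),
    and the cone condition bounds M itself.\<close>
  have "M \<le> lam * sqrt (1 + M\<^sup>2)"
  proof (rule field_le_epsilon)
    fix e :: real assume "0 < e"
    have "0 < 1 + lam * C"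
      using lam_pos C_nonneg by (simp add: add_pos_nonneg)
    define t where "t = min 1 (e / (1 + lam * C))"
    have "0 < t" "t \<le> 1" "t \<le> e / (1 + lam * C)"
      using \<open>0 < e\<close> \<open>0 < 1 + lam * C\<close> by (simp_all add: t_def)
    moreover have "t\<^sup>2 \<le> t"
      using \<open>0 < t\<close> \<open>t \<le> 1\<close> by (simp add: power2_eq_square mult_left_le)
    ultimately have "t\<^sup>2 + lam * C * t \<le> e"
      using \<open>0 < 1 + lam * C\<close> by (simp add: le_divide_eq algebra_simps)
    obtain x y where "x \<in> {a..b}" "y \<in> {a..b}" "x < y" "(M - t\<^sup>2) * (y - x) \<le> \<bar>f y - f x\<bar>"
      using M_optimal[of "t\<^sup>2"] \<open>0 < t\<close> by auto
    then have "M \<le> lam * sqrt (1 + M\<^sup>2) + t\<^sup>2 + lam * C * t"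
      using M_lipschitz \<open>0 < t\<close> by (intro slope_bound_near_extremal) auto
    then show "M \<le> lam * sqrt (1 + M\<^sup>2) + e"
      using \<open>t\<^sup>2 + lam * C * t \<le> e\<close> by linarith
  qed
  then have "M \<le> lam / sqrt (1 - lam\<^sup>2)"
    using lam_pos lam_less_one by (rule slope_le_of_cone[rotated 2])
  then have "M * \<bar>v - u\<bar> \<le> lam / sqrt (1 - lam\<^sup>2) * \<bar>v - u\<bar>"
    by (rule mult_right_mono) simp
  moreover have "\<bar>f v - f u\<bar> \<le> M * \<bar>v - u\<bar>"
    using M_lipschitz[of u v] M_lipschitz[of v u] assms
    by (cases "u \<le> v") (simp_all add: abs_minus_commute)
  ultimately show ?thesis
    by linarith
qed simp

lemma taylor:
  assumes "s \<in> {a..b}" and "t \<in> {a..b}"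
  shows "\<bar>g t - g s + f s * (t - s)\<bar> \<le> lam / sqrt (1 - lam\<^sup>2) * (t - s)\<^sup>2 / 2"
proof -
  have "\<bar>g t - g s - - f s * (t - s)\<bar> \<le> lam / sqrt (1 - lam\<^sup>2) * (t - s)\<^sup>2 / 2"
  proof (rule abs_taylor_remainder_le[OF g_deriv _ assms])
    fix x y assume "x \<in> {a..b}" "y \<in> {a..b}"
    then show "\<bar>- f y - - f x\<bar> \<le> lam / sqrt (1 - lam\<^sup>2) * \<bar>y - x\<bar>"
      using lipschitz[of x y] by (simp add: abs_minus_commute)
  qed
  then show ?thesis
    by simp
qed

end

section \<open>Intrinsic Lipschitz graphs\<close>

lemma graph_point_eq: "hmult (u, 0, z) (Ypow y) = (u, y, z + u * y / 2)"
  by (simp add: hmult_def Ypow_def hx_def hy_def hz_def)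

lemma intrinsic_lipschitz_graph_cone:
  fixes \<psi> :: "heis \<Rightarrow> real" and g :: "real \<Rightarrow> real"
  defines "f \<equiv> \<lambda>w. \<psi> (w, 0, g w)"
  assumes "0 \<le> lam" and "intrinsic_lipschitz_graph lam U \<psi>"
    and "(u, 0, g u) \<in> U" and "(v, 0, g v) \<in> U"
  shows "\<bar>f v - f u\<bar> \<le> lam * (sqrt ((v - u)\<^sup>2 + (f v - f u)\<^sup>2)
    + 2 * sqrt 70 * sqrt \<bar>trapezoid_error g f u v\<bar>)"
proof -
  define p q where "p = (u, f u, g u + u * f u / 2)" and "q = (v, f v, g v + v * f v / 2)"
  have "p = hmult (u, 0, g u) (Ypow (\<psi> (u, 0, g u)))" "q = hmult (v, 0, g v) (Ypow (\<psi> (v, 0, g v)))"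
    by (simp_all add: p_def q_def f_def graph_point_eq)
  then have "p \<in> intrinsic_graph U \<psi>" "q \<in> intrinsic_graph U \<psi>"
    unfolding intrinsic_graph_def using assms(4,5) by blast+
  then have "\<bar>hy q - hy p\<bar> \<le> lam * cc_dist p q"
    using assms(3) unfolding intrinsic_lipschitz_graph_def by blast
  also have "\<dots> \<le> lam * (sqrt ((v - u)\<^sup>2 + (f v - f u)\<^sup>2) + 2 * sqrt 70 * sqrt \<bar>trapezoid_error g f u v\<bar>)"
  proof -
    have "hz q - hz p - (hx p * hy q - hy p * hx q) / 2 = trapezoid_error g f u v"
      by (simp add: p_def q_def hx_def hy_def hz_def trapezoid_error_def field_simps)
    then show ?thesis
      using cc_dist_le[of p q] assms(2) by (intro mult_left_mono) (simp_all add: p_def q_def hx_def hy_def)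
  qed
  finally show ?thesis
    by (simp add: p_def q_def hy_def)
qed

lemma characteristic_cone_intrinsic_lipschitz_graph:
  fixes \<psi> :: "heis \<Rightarrow> real" and g :: "real \<Rightarrow> real"
  assumes "0 < lam" and "lam < 1" and "continuous_on U \<psi>" and "intrinsic_lipschitz_graph lam U \<psi>"
    and g_deriv: "\<And>x. x \<in> {a..b} \<Longrightarrow> (g has_real_derivative - \<psi> (x, 0, g x)) (at x within {a..b})"
    and on_U: "\<And>x. x \<in> {a..b} \<Longrightarrow> (x, 0, g x) \<in> U"
  shows "characteristic_cone lam (2 * sqrt 70) a b (\<lambda>w. \<psi> (w, 0, g w)) g"
proof
  have "continuous_on {a..b} g"
    unfolding continuous_on_eq_continuous_within using g_deriv DERIV_continuous by blast
  then have "continuous_on {a..b} (\<lambda>w. (w, 0::real, g w))"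
    by (intro continuous_intros)
  moreover have "(\<lambda>w. (w, 0, g w)) ` {a..b} \<subseteq> U"
    using on_U by auto
  ultimately show "continuous_on {a..b} (\<lambda>w. \<psi> (w, 0, g w))"
    by (rule continuous_on_compose2[OF assms(3)])
  fix u v assume "u \<in> {a..b}" "v \<in> {a..b}"
  then show "\<bar>\<psi> (v, 0, g v) - \<psi> (u, 0, g u)\<bar> \<le> lam * (sqrt ((v - u)\<^sup>2 + (\<psi> (v, 0, g v) - \<psi> (u, 0, g u))\<^sup>2)
      + 2 * sqrt 70 * sqrt \<bar>trapezoid_error g (\<lambda>w. \<psi> (w, 0, g w)) u v\<bar>)"
    using assms(1,4) on_U by (intro intrinsic_lipschitz_graph_cone) auto
qed (use assms(1,2) g_deriv in auto)

theorem mainTheorem13: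
  fixes lam :: real and U :: "heis set" and \<psi> :: "heis \<Rightarrow> real"
    and I :: "real set" and g g' :: "real \<Rightarrow> real"
  assumes "0 < lam" and "lam < 1"
    and "U \<subseteq> V0" and "openin (top_of_set V0) U"
    and "continuous_on U \<psi>"
    and "intrinsic_lipschitz_graph lam U \<psi>"
    and "is_interval I"
    and "\<And>t. t \<in> I \<Longrightarrow> (g has_real_derivative g' t) (at t within I)"
    and "\<And>t. t \<in> I \<Longrightarrow> (t, 0, g t) \<in> U"
    and "\<And>t. t \<in> I \<Longrightarrow> g' t + \<psi> (t, 0, g t) = 0"
    and "s \<in> I" and "t \<in> I"
  shows "\<bar>\<psi> (s, 0, g s) - \<psi> (t, 0, g t)\<bar> \<le> (lam / sqrt (1 - lam\<^sup>2)) * \<bar>s - t\<bar>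
       \<and> \<bar>g t - g s - g' s * (t - s)\<bar> \<le> (lam / sqrt (1 - lam\<^sup>2)) * (t - s)\<^sup>2 / 2"
proof -
  define a b where "a = min s t" and "b = max s t"
  have "a \<in> I" "b \<in> I"
    using assms(11,12) by (simp_all add: a_def b_def min_def max_def)
  then have "{a..b} \<subseteq> I"
    using mem_is_interval_1_I[OF assms(7)] by (meson atLeastAtMost_iff subsetI)
  then have ab: "s \<in> {a..b}" "t \<in> {a..b}" "{a..b} \<subseteq> I"
    by (simp_all add: a_def b_def)
  have g'_eq: "g' x = - \<psi> (x, 0, g x)" if "x \<in> I" for x
    using assms(10)[OF that] by (simp add: eq_neg_iff_add_eq_0)
  have "(g has_real_derivative - \<psi> (x, 0, g x)) (at x within {a..b})" if "x \<in> {a..b}" for x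
    using DERIV_subset[OF assms(8) ab(3)] g'_eq ab(3) that by auto
  then interpret characteristic_cone lam "2 * sqrt 70" a b "\<lambda>w. \<psi> (w, 0, g w)" g
    using assms(1,2,5,6,9) ab(3) by (intro characteristic_cone_intrinsic_lipschitz_graph) auto
  show ?thesis
    using lipschitz[OF ab(2,1)] taylor[OF ab(1,2)] g'_eq[OF assms(11)] by simp
qed

end
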